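(* Consider the generative logic with $\mu\to 1$ in the setting below. Let $\Omega$ and $\Delta$ be finite multisets of time-indexed formulas such that $E'(\Delta)\neq\emptyset$. Then $$p(\Omega\mid\Delta)=\frac{|E(\Omega)\cap E'(\Delta)|}{|E'(\Delta)|}.$$
   Context: Let $\mathcal{L}$ be a propositional language and let $K,T\ge1$. There are data sequences $d_1,\dots,d_K$; repetitions are allowed, and data are identified by their index $k$. Each $d_k$ is associated with a sequence of models $m(d_k)=(m(d_k)^1,\dots,m(d_k)^T)$ of $\mathcal{L}$. The prior is $p(d_k)=1/K$. A time-indexed formula is written $\alpha^t$, with $\alpha\in\mathcal{L}$ and $1\le t\le T$. Write $[\![\alpha^t]\!]_k=1$ if $\alpha$ is true in $m(d_k)^t$, and $0$ otherwise. For $\mu\in(0,1)$ and a finite multiset $X$ of time-indexed formulas, define $$p(X\mid d_k,\mu)=\prod_{\alpha^t\in X}\mu^{[\![\alpha^t]\!]_k}(1-\mu)^{1-[\![\alpha^t]\!]_k}.$$ Then define $$p(\Omega\mid\Delta)=\lim_{\mu\to1}\frac{\sum_k p(\Omega\mid d_k,\mu)\,p(\Delta\mid d_k,\mu)\,p(d_k)}{\sum_k p(\Delta\mid d_k,\mu)\,p(d_k)}.$$ An index $k$ is an evidence of $X$ if $[\![\alpha^t]\!]_k=1$ for all $\alpha^t\in X$. Let $E(X)$ be the set of such indices. $X$ is called founded if $E(X)\neq\emptyset$. Let $MFS(\Delta)$ be the set of nonempty founded sub-multisets $S\subseteq\Delta$ that have maximum cardinality among all nonempty founded sub-multisets of $\Delta$.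 Set $E'(\Delta)=\bigcup_{S\in MFS(\Delta)}E(S)$. This union is empty if $MFS(\Delta)=\emptyset$. Cardinalities $|\cdot|$ count indices. *)

theory Defs
  imports "HOL-Analysis.Analysis" "HOL-Library.Multiset"
begin

datatype 'a form = Atom 'a | Neg "'a form" | Conj "'a form" "'a form" | Disj "'a form" "'a form"
  | Imp "'a form" "'a form" | Top | Bot

fun holds :: "('a \<Rightarrow> bool) \<Rightarrow> 'a form \<Rightarrow> bool" where
  "holds v (Atom a) = v a"
| "holds v (Neg f) = (\<not> holds v f)"
| "holds v (Conj f g) = (holds v f \<and> holds v g)"
| "holds v (Disj f g) = (holds v f \<or> holds v g)"
| "holds v (Imp f g) = (holds v f \<longrightarrow> holds v g)"
| "holds v Top = True"
| "holds v Bot = False"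

text \<open>A time-indexed formula alpha^t is a pair (alpha, t).
  m k t is the model m(d_k)^t; data indices are k in {1..K}.\<close>

definition truth :: "(nat \<Rightarrow> nat \<Rightarrow> ('a \<Rightarrow> bool)) \<Rightarrow> nat \<Rightarrow> 'a form \<times> nat \<Rightarrow> bool" where
  "truth m k x = holds (m k (snd x)) (fst x)"

definition lik :: "(nat \<Rightarrow> nat \<Rightarrow> ('a \<Rightarrow> bool)) \<Rightarrow> ('a form \<times> nat) multiset \<Rightarrow> nat \<Rightarrow> real \<Rightarrow> real" where
  "lik m X k \<mu> = prod_mset (image_mset (\<lambda>x. if truth m k x then \<mu> else 1 - \<mu>) X)"

definition evid :: "nat \<Rightarrow> (nat \<Rightarrow> nat \<Rightarrow> ('a \<Rightarrow> bool)) \<Rightarrow> ('a form \<times> nat) multiset \<Rightarrow> nat set" where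
  "evid K m X = {k \<in> {1..K}. \<forall>x \<in># X. truth m k x}"

definition founded :: "nat \<Rightarrow> (nat \<Rightarrow> nat \<Rightarrow> ('a \<Rightarrow> bool)) \<Rightarrow> ('a form \<times> nat) multiset \<Rightarrow> bool" where
  "founded K m X \<longleftrightarrow> evid K m X \<noteq> {}"

definition MFS :: "nat \<Rightarrow> (nat \<Rightarrow> nat \<Rightarrow> ('a \<Rightarrow> bool)) \<Rightarrow> ('a form \<times> nat) multiset \<Rightarrow> ('a form \<times> nat) multiset set" where
  "MFS K m D = {S. S \<subseteq># D \<and> S \<noteq> {#} \<and> founded K m S \<and>
      (\<forall>S'. S' \<subseteq># D \<and> S' \<noteq> {#} \<and> founded K m S' \<longrightarrow> size S' \<le> size S)}"

definition evid' :: "nat \<Rightarrow> (nat \<Rightarrow> nat \<Rightarrow> ('a \<Rightarrow> bool)) \<Rightarrow> ('a form \<times> nat) multiset \<Rightarrow> nat set" where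
  "evid' K m D = (\<Union>S \<in> MFS K m D. evid K m S)"

text \<open>The ratio whose limit as mu tends to 1 defines p(Omega | Delta); prior p(d_k) = 1/K.\<close>
definition gen_ratio :: "nat \<Rightarrow> (nat \<Rightarrow> nat \<Rightarrow> ('a \<Rightarrow> bool)) \<Rightarrow> ('a form \<times> nat) multiset \<Rightarrow> ('a form \<times> nat) multiset \<Rightarrow> real \<Rightarrow> real" where
  "gen_ratio K m Om D \<mu> =
     (\<Sum>k\<in>{1..K}. lik m Om k \<mu> * lik m D k \<mu> * (1 / real K)) /
     (\<Sum>k\<in>{1..K}. lik m D k \<mu> * (1 / real K))"

end

theory Submission
  imports Defs
begin

text \<open>Writing \<open>c\<^sub>k\<close> for the number of formulas of \<open>\<Delta>\<close> true at datum \<open>k\<close>, the likelihood of \<open>\<Delta>\<close>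
  under \<open>d\<^sub>k\<close> is \<open>\<mu>^c\<^sub>k (1 - \<mu>)^(|\<Delta>| - c\<^sub>k)\<close>. As \<open>\<mu> \<rightarrow> 1\<close> the data with maximal \<open>c\<^sub>k\<close> dominate
  all others, each with the same weight, and these data are exactly \<open>E'(\<Delta>)\<close>: a maximum-size
  founded sub-multiset of \<open>\<Delta>\<close> consists of all formulas true at some datum of maximal count.
  Meanwhile the likelihood of \<open>\<Omega>\<close> under \<open>d\<^sub>k\<close> tends to the indicator of \<open>k \<in> E(\<Omega>)\<close>.\<close>

definition sat_count :: "(nat \<Rightarrow> nat \<Rightarrow> ('a \<Rightarrow> bool)) \<Rightarrow> ('a form \<times> nat) multiset \<Rightarrow> nat \<Rightarrow> nat" where
  "sat_count m X k = size (filter_mset (truth m k) X)"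

lemma sat_count_le_size: "sat_count m X k \<le> size X"
  unfolding sat_count_def by simp

lemma lik_eq_power:
  "lik m X k \<mu> = \<mu> ^ sat_count m X k * (1 - \<mu>) ^ (size X - sat_count m X k)"
proof -
  have "size X = sat_count m X k + size (filter_mset (\<lambda>x. \<not> truth m k x) X)"
    unfolding sat_count_def by (metis multiset_partition size_union)
  moreover have "lik m X k \<mu> = \<mu> ^ size (filter_mset (truth m k) X) *
      (1 - \<mu>) ^ size (filter_mset (\<lambda>x. \<not> truth m k x) X)"
    unfolding lik_def by (induction X) (auto simp: mult_ac)
  ultimately show ?thesis
    unfolding sat_count_def by simp
qed

lemma lik_at_1: "lik m X k 1 = (if \<forall>x \<in># X. truth m k x then 1 else 0)"
  unfolding lik_def by (induction X) auto

lemma isCont_lik: "isCont (lik m X k) \<mu>"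
  unfolding lik_eq_power[abs_def] by (intro continuous_intros)

lemma sum_lik_at_1:
  assumes "A \<subseteq> {1..K}"
  shows "(\<Sum>k\<in>A. lik m X k 1) = real (card (evid K m X \<inter> A))"
proof -
  have "finite A"
    using assms finite_subset by blast
  moreover have "{k \<in> A. \<forall>x \<in># X. truth m k x} = evid K m X \<inter> A"
    using assms unfolding evid_def by auto
  ultimately show ?thesis
    by (simp add: lik_at_1 sum.If_cases Int_def)
qed

lemma gen_ratio_eq:
  "gen_ratio K m \<Omega> \<Delta> \<mu> =
     (\<Sum>k\<in>{1..K}. lik m \<Omega> k \<mu> * lik m \<Delta> k \<mu>) / (\<Sum>k\<in>{1..K}. lik m \<Delta> k \<mu>)"
  unfolding gen_ratio_def by (cases "K = 0") (simp_all flip: sum_divide_distrib)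

lemma evid_filter_truth: "k \<in> {1..K} \<Longrightarrow> k \<in> evid K m (filter_mset (truth m k) D)"
  unfolding evid_def by auto

lemma size_le_sat_count:
  assumes "S \<subseteq># D" and "k \<in> evid K m S"
  shows "size S \<le> sat_count m D k"
proof -
  have "filter_mset (truth m k) S = S"
    using assms(2) unfolding evid_def by (auto simp: filter_mset_eq_conv)
  then have "S \<subseteq># filter_mset (truth m k) D"
    using multiset_filter_mono[OF assms(1), of "truth m k"] by simp
  then show ?thesis
    unfolding sat_count_def by (rule size_mset_mono)
qed

lemma sat_count_le_Max: "k \<in> {1..K} \<Longrightarrow> sat_count m D k \<le> Max (sat_count m D ` {1..K})"
  by simp

lemma size_le_Max_sat_count:
  assumes "S \<subseteq># D" and "founded K m S"
  shows "size S \<le> Max (sat_count m D ` {1..K})"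
proof -
  obtain k where k: "k \<in> evid K m S"
    using assms(2) unfolding founded_def by auto
  then have "k \<in> {1..K}"
    unfolding evid_def by simp
  have "size S \<le> sat_count m D k"
    using assms(1) k by (rule size_le_sat_count)
  also have "\<dots> \<le> Max (sat_count m D ` {1..K})"
    using \<open>k \<in> {1..K}\<close> by (rule sat_count_le_Max)
  finally show ?thesis .
qed

lemma filter_truth_in_MFS:
  assumes "k \<in> {1..K}" and "sat_count m D k = Max (sat_count m D ` {1..K})"
    and "Max (sat_count m D ` {1..K}) \<noteq> 0"
  shows "filter_mset (truth m k) D \<in> MFS K m D"
proof -
  have size_eq: "size (filter_mset (truth m k) D) = Max (sat_count m D ` {1..K})"
    using assms(2) unfolding sat_count_def by simp
  have "founded K m (filter_mset (truth m k) D)"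
    using evid_filter_truth[OF assms(1)] unfolding founded_def by auto
  moreover have "filter_mset (truth m k) D \<noteq> {#}"
    using size_eq assms(3) by (metis size_empty)
  ultimately show ?thesis
    unfolding MFS_def using size_le_Max_sat_count size_eq by auto
qed

lemma size_MFS_eq_Max:
  assumes "S \<in> MFS K m D"
  shows "size S = Max (sat_count m D ` {1..K})" (is "_ = ?M")
proof -
  have S: "S \<subseteq># D" "S \<noteq> {#}" "founded K m S"
    and S_max: "\<And>S'. S' \<subseteq># D \<Longrightarrow> S' \<noteq> {#} \<Longrightarrow> founded K m S' \<Longrightarrow> size S' \<le> size S"
    using assms unfolding MFS_def by auto
  have le: "size S \<le> ?M"
    using S(1,3) by (rule size_le_Max_sat_count)
  have "{1..K} \<noteq> {}"
    using S(3) unfolding founded_def evid_def by auto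
  then have "?M \<in> sat_count m D ` {1..K}"
    by (intro Max_in) auto
  then obtain k0 where k0: "k0 \<in> {1..K}" "sat_count m D k0 = ?M"
    by auto
  have "?M \<noteq> 0"
    using le S(2) by (metis le_zero_eq size_eq_0_iff_empty)
  then have "filter_mset (truth m k0) D \<in> MFS K m D"
    using k0 by (intro filter_truth_in_MFS)
  then have "size (filter_mset (truth m k0) D) \<le> size S"
    using S_max unfolding MFS_def by blast
  then have "?M \<le> size S"
    using k0(2) unfolding sat_count_def by simp
  with le show ?thesis
    by simp
qed

lemma evid'_eq_argmax_sat_count:
  assumes "evid' K m D \<noteq> {}"
  shows "evid' K m D = {k \<in> {1..K}. sat_count m D k = Max (sat_count m D ` {1..K})}"
    (is "_ = {k \<in> {1..K}. sat_count m D k = ?M}")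
proof
  show "evid' K m D \<subseteq> {k \<in> {1..K}. sat_count m D k = ?M}"
  proof
    fix k assume "k \<in> evid' K m D"
    then obtain S where S: "S \<in> MFS K m D" "k \<in> evid K m S"
      unfolding evid'_def by auto
    have "k \<in> {1..K}" and "S \<subseteq># D"
      using S unfolding evid_def MFS_def by auto
    then have "?M \<le> sat_count m D k"
      using size_MFS_eq_Max[OF S(1)] size_le_sat_count[OF _ S(2)] by simp
    then have "sat_count m D k = ?M"
      using sat_count_le_Max[OF \<open>k \<in> {1..K}\<close>] by (rule antisym[rotated])
    with \<open>k \<in> {1..K}\<close> show "k \<in> {k \<in> {1..K}. sat_count m D k = ?M}"
      by simp
  qed
next
  obtain S where S: "S \<in> MFS K m D"
    using assms unfolding evid'_def by auto
  then have "size S \<noteq> 0"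
    unfolding MFS_def by simp
  then have "?M \<noteq> 0"
    by (metis size_MFS_eq_Max[OF S])
  show "{k \<in> {1..K}. sat_count m D k = ?M} \<subseteq> evid' K m D"
  proof
    fix k assume k: "k \<in> {k \<in> {1..K}. sat_count m D k = ?M}"
    then have "filter_mset (truth m k) D \<in> MFS K m D"
      using \<open>?M \<noteq> 0\<close> by (intro filter_truth_in_MFS) auto
    moreover have "k \<in> evid K m (filter_mset (truth m k) D)"
      using k by (intro evid_filter_truth) simp
    ultimately show "k \<in> evid' K m D"
      unfolding evid'_def by blast
  qed
qed

lemma weighted_average_cancel_common_power:
  fixes \<mu> :: real and f :: "'i \<Rightarrow> real"
  assumes "\<mu> < 1" and "\<forall>k\<in>I. c k \<le> M" and "M \<le> n"
  shows "(\<Sum>k\<in>I. f k * (\<mu> ^ c k * (1 - \<mu>) ^ (n - c k))) / (\<Sum>k\<in>I. \<mu> ^ c k * (1 - \<mu>) ^ (n - c k))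
       = (\<Sum>k\<in>I. f k * (\<mu> ^ c k * (1 - \<mu>) ^ (M - c k))) / (\<Sum>k\<in>I. \<mu> ^ c k * (1 - \<mu>) ^ (M - c k))"
proof -
  have split: "\<mu> ^ c k * (1 - \<mu>) ^ (n - c k) = (1 - \<mu>) ^ (n - M) * (\<mu> ^ c k * (1 - \<mu>) ^ (M - c k))"
    if "k \<in> I" for k
  proof -
    have "n - c k = (n - M) + (M - c k)"
      using assms(2,3) that by auto
    then show ?thesis
      by (simp only: power_add mult_ac)
  qed
  have "(\<Sum>k\<in>I. f k * (\<mu> ^ c k * (1 - \<mu>) ^ (n - c k))) / (\<Sum>k\<in>I. \<mu> ^ c k * (1 - \<mu>) ^ (n - c k))
      = ((1 - \<mu>) ^ (n - M) * (\<Sum>k\<in>I. f k * (\<mu> ^ c k * (1 - \<mu>) ^ (M - c k)))) /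
        ((1 - \<mu>) ^ (n - M) * (\<Sum>k\<in>I. \<mu> ^ c k * (1 - \<mu>) ^ (M - c k)))"
    unfolding sum_distrib_left
    by (intro arg_cong2[where f = "(/)"] sum.cong) (simp_all add: split mult_ac)
  also have "\<dots> = (\<Sum>k\<in>I. f k * (\<mu> ^ c k * (1 - \<mu>) ^ (M - c k))) /
      (\<Sum>k\<in>I. \<mu> ^ c k * (1 - \<mu>) ^ (M - c k))"
    using assms(1) by simp
  finally show ?thesis .
qed

text \<open>After cancelling \<open>(1 - \<mu>)^(n - M)\<close> the ratio is continuous at \<open>\<mu> = 1\<close>, where only the
  terms with maximal count \<open>c k = M\<close> survive.\<close>

lemma tendsto_weighted_average_max_count:
  fixes I :: "'i set" and c :: "'i \<Rightarrow> nat" and f :: "'i \<Rightarrow> real \<Rightarrow> real"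
  defines "A \<equiv> {k \<in> I. c k = Max (c ` I)}"
  assumes "finite I" and "I \<noteq> {}" and "\<forall>k\<in>I. c k \<le> n" and "\<forall>k\<in>I. isCont (f k) 1"
  shows "((\<lambda>\<mu>. (\<Sum>k\<in>I. f k \<mu> * (\<mu> ^ c k * (1 - \<mu>) ^ (n - c k))) /
                (\<Sum>k\<in>I. \<mu> ^ c k * (1 - \<mu>) ^ (n - c k)))
          \<longlongrightarrow> (\<Sum>k\<in>A. f k 1) / real (card A)) (at_left 1)"
proof -
  define M where "M = Max (c ` I)"
  have c_le_M: "\<forall>k\<in>I. c k \<le> M"
    using assms(2) unfolding M_def by simp
  have "M \<in> c ` I"
    using assms(2,3) unfolding M_def by simp
  then have "M \<le> n" and "A \<noteq> {}"
    using assms(4) unfolding A_def M_def by auto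
  have "A \<subseteq> I" and "finite A"
    using assms(2) unfolding A_def by auto
  define g where "g k \<mu> = \<mu> ^ c k * (1 - \<mu>) ^ (M - c k)" for k and \<mu> :: real
  define h where "h \<mu> = (\<Sum>k\<in>I. f k \<mu> * g k \<mu>) / (\<Sum>k\<in>I. g k \<mu>)" for \<mu>
  have g_1: "g k 1 = (if k \<in> A then 1 else 0)" if "k \<in> I" for k
    using c_le_M that unfolding g_def A_def M_def by auto
  have sum_g_1: "(\<Sum>k\<in>I. g k 1) = real (card A)"
    using assms(2) \<open>A \<subseteq> I\<close> by (simp add: g_1 sum.If_cases Int_absorb1)
  have "(\<Sum>k\<in>I. f k 1 * g k 1) = (\<Sum>k\<in>I. if k \<in> A then f k 1 else 0)"
    by (rule sum.cong) (simp_all add: g_1)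
  also have "\<dots> = (\<Sum>k\<in>A. f k 1)"
    using assms(2) \<open>A \<subseteq> I\<close> by (simp add: sum.If_cases Int_absorb1)
  finally have sum_fg_1: "(\<Sum>k\<in>I. f k 1 * g k 1) = (\<Sum>k\<in>A. f k 1)" .
  have "real (card A) \<noteq> 0"
    using \<open>finite A\<close> \<open>A \<noteq> {}\<close> by simp
  then have "isCont h 1"
    unfolding h_def using assms(5) sum_g_1 unfolding g_def
    by (intro continuous_intros) auto
  then have "(h \<longlongrightarrow> (\<Sum>k\<in>A. f k 1) / real (card A)) (at_left 1)"
    using sum_g_1 sum_fg_1 by (simp add: isCont_def filterlim_at_split h_def)
  moreover have "\<forall>\<^sub>F \<mu> in at_left 1. h \<mu> = (\<Sum>k\<in>I. f k \<mu> * (\<mu> ^ c k * (1 - \<mu>) ^ (n - c k))) /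
                (\<Sum>k\<in>I. \<mu> ^ c k * (1 - \<mu>) ^ (n - c k))"
    using weighted_average_cancel_common_power[OF _ c_le_M \<open>M \<le> n\<close>]
    unfolding h_def g_def by (auto simp: eventually_at_left_field intro: exI[of _ 0])
  ultimately show ?thesis
    by (rule Lim_transform_eventually)
qed

theorem theorem1:
  fixes K T :: nat and m :: "nat \<Rightarrow> nat \<Rightarrow> ('a \<Rightarrow> bool)"
    and \<Omega> \<Delta> :: "('a form \<times> nat) multiset"
  assumes "K \<ge> 1" and "T \<ge> 1"
    and "\<forall>x \<in># \<Omega>. 1 \<le> snd x \<and> snd x \<le> T"
    and "\<forall>x \<in># \<Delta>. 1 \<le> snd x \<and> snd x \<le> T"
    and "evid' K m \<Delta> \<noteq> {}"
  shows "(gen_ratio K m \<Omega> \<Delta> \<longlongrightarrow>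
           real (card (evid K m \<Omega> \<inter> evid' K m \<Delta>)) / real (card (evid' K m \<Delta>)))
         (at_left 1)"
proof -
  have E': "evid' K m \<Delta> = {k \<in> {1..K}. sat_count m \<Delta> k = Max (sat_count m \<Delta> ` {1..K})}"
    using assms(5) by (rule evid'_eq_argmax_sat_count)
  have "(gen_ratio K m \<Omega> \<Delta> \<longlongrightarrow> (\<Sum>k\<in>evid' K m \<Delta>. lik m \<Omega> k 1) / real (card (evid' K m \<Delta>)))
      (at_left 1)"
    unfolding gen_ratio_eq[abs_def] lik_eq_power[of m \<Delta>] E'
    using assms(1) sat_count_le_size isCont_lik
    by (intro tendsto_weighted_average_max_count) auto
  moreover have "evid' K m \<Delta> \<subseteq> {1..K}"
    unfolding E' by auto
  ultimately show ?thesis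
    by (simp add: sum_lik_at_1)
qed

end
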